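(* Let $\delta\in(0,\tfrac12)$ and $0<\epsilon<1-h(\delta)$. For $m\ge1$ let $r^*(m,\epsilon):=\min\{r: \binom{m}{\le r}/2^m\ge 1-\frac{h(\delta)}{1-\epsilon}\}$. Then: (1) $r^*(m,\epsilon)\le r(m,\epsilon)$ for every $m$; (2) $\lim_{m\to\infty}\binom{m}{\le r^*(m,\epsilon)}/2^m=1-\frac{h(\delta)}{1-\epsilon}$; (3) there is a constant $C(\epsilon)$ (depending on $\epsilon$ and $\delta$) such that $r^*(m,\epsilon)=\frac m2+C(\epsilon)\sqrt m+o(\sqrt m)$ as $m\to\infty$.
   Context: $h(\delta)=-\delta\log_2\delta-(1-\delta)\log_2(1-\delta)$ and $\binom{m}{\le r}=\sum_{i=0}^r\binom{m}{i}$. Every function $\mathbb{F}_2^m\to\mathbb{F}_2$ is uniquely a multilinear polynomial $\sum_{S\subseteq[m]}c_Sx_S$, $x_S=\prod_{i\in S}x_i$. Let $Z=(Z_x)_{x\in\mathbb{F}_2^m}$ have i.i.d. Bernoulli$(\delta)$ entries and let $W=(W_S)_{S\subseteq[m]}$ be the coefficient vector of the multilinear polynomial whose evaluation table is $Z$; $W_r=(W_S)_{|S|=r}$, $W_{>r}=(W_S)_{|S|>r}$. Let $f^{avg}_{m,r}:=H(W_r\mid W_{>r})/\binom{m}{r}$ (base-2 conditional entropy) and $r(m,\epsilon):=\max\{r\in\{0,\dots,m\}: f^{avg}_{m,r}<1-\epsilon\}$. *)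

theory Defs
  imports "HOL-Analysis.Analysis" "HOL-Library.Landau_Symbols"
begin

definition bin_entropy :: "real \<Rightarrow> real" where
  "bin_entropy d = - d * log 2 d - (1 - d) * log 2 (1 - d)"

definition binom_le :: "nat \<Rightarrow> nat \<Rightarrow> nat" where
  "binom_le m r = (\<Sum>i\<le>r. m choose i)"

(* Points of F_2^m are identified with their supports T \<subseteq> {..<m};
   an evaluation table Z : F_2^m \<rightarrow> F_2 is identified with the set z of
   points where Z = 1, so the sample space is Pow (Pow {..<m}). *)
definition points :: "nat \<Rightarrow> nat set set" where
  "points m = Pow {..<m}"

definition sample_space :: "nat \<Rightarrow> nat set set set" where
  "sample_space m = Pow (points m)"

definition zprob :: "real \<Rightarrow> nat \<Rightarrow> nat set set \<Rightarrow> real" where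
  "zprob d m z = d ^ card z * (1 - d) ^ (2 ^ m - card z)"

(* Coefficient vector (as the set of monomials x_S with c_S = 1) of the unique
   multilinear polynomial with evaluation table z: over F_2,
   f(x) = sum_{S \<subseteq> supp x} c_S, hence c_S = sum_{T \<subseteq> S} f(T) (Moebius inversion). *)
definition coeffs :: "nat \<Rightarrow> nat set set \<Rightarrow> nat set set" where
  "coeffs m z = {S \<in> points m. odd (card {T \<in> z. T \<subseteq> S})}"

definition W_eq :: "nat \<Rightarrow> nat \<Rightarrow> nat set set \<Rightarrow> nat set set" where
  "W_eq m r z = {S \<in> coeffs m z. card S = r}"

definition W_gt :: "nat \<Rightarrow> nat \<Rightarrow> nat set set \<Rightarrow> nat set set" where
  "W_gt m r z = {S \<in> coeffs m z. card S > r}"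

definition cond_entropy ::
  "('w \<Rightarrow> real) \<Rightarrow> 'w set \<Rightarrow> ('w \<Rightarrow> 'a) \<Rightarrow> ('w \<Rightarrow> 'b) \<Rightarrow> real" where
  "cond_entropy P \<Omega> X Y =
     - (\<Sum>ab \<in> (\<lambda>w. (X w, Y w)) ` \<Omega>.
          let pxy = (\<Sum>w\<in>{w\<in>\<Omega>. X w = fst ab \<and> Y w = snd ab}. P w);
              py  = (\<Sum>w\<in>{w\<in>\<Omega>. Y w = snd ab}. P w)
          in pxy * log 2 (pxy / py))"

definition f_avg :: "real \<Rightarrow> nat \<Rightarrow> nat \<Rightarrow> real" where
  "f_avg d m r =
     cond_entropy (zprob d m) (sample_space m) (W_eq m r) (W_gt m r) / real (m choose r)"

definition r_max :: "real \<Rightarrow> nat \<Rightarrow> real \<Rightarrow> nat" where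
  "r_max d m eps = Max {r \<in> {0..m}. f_avg d m r < 1 - eps}"

definition r_star :: "real \<Rightarrow> nat \<Rightarrow> real \<Rightarrow> nat" where
  "r_star d m eps =
     (LEAST r. real (binom_le m r) / 2 ^ m \<ge> 1 - bin_entropy d / (1 - eps))"

end

theory Submission
  imports Defs "HOL-Probability.Probability" "HOL-Real_Asymp.Real_Asymp"
begin

text \<open>
  (1) By the chain rule, the conditional entropies H(W_r | W_>r), r0 <= r <= m, telescope to
  H(W_>=r0) <= H(Z) = 2^m h(delta), as W_>=r0 is a function of Z. If f^avg_{m,r} >= 1 - eps for
  every r >= r*, the sum would be at least (1 - eps) sum_{r >= r*} binom(m, r), which by minimality
  of r* exceeds (1 - eps) (1 - t) 2^m = 2^m h(delta), where t = 1 - h(delta)/(1 - eps).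

  (2), (3) r* is the t-quantile of Bin(m, 1/2). The standardised binomial has characteristic
  function cos(s/sqrt m)^m --> exp(-s^2/2), so by Levy's continuity theorem (de Moivre-Laplace)
  r* = m/2 + Phi^-1(t) sqrt m / 2 + o(sqrt m); continuity of Phi then gives the limit in (2).
\<close>

lemma sum_binomial_weights: "(\<Sum>k\<le>n. real (n choose k) * p ^ k * (1 - p) ^ (n - k)) = 1"
  using binomial_ring[of p "1 - p" n] by simp

lemma sum_binomial_weights_mean:
  "(\<Sum>k\<le>n. real k * (real (n choose k) * p ^ k * (1 - p) ^ (n - k))) = real n * p"
proof (cases n)
  case (Suc M)
  have "(\<Sum>k\<le>Suc M. real k * (real (Suc M choose k) * p ^ k * (1 - p) ^ (Suc M - k)))
      = (\<Sum>j\<le>M. real (Suc j * (Suc M choose Suc j)) * p ^ Suc j * (1 - p) ^ (M - j))"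
    by (subst sum.atMost_Suc_shift) (simp del: binomial_Suc_Suc add: algebra_simps)
  also have "\<dots> = (\<Sum>j\<le>M. (real (Suc M) * p) * (real (M choose j) * p ^ j * (1 - p) ^ (M - j)))"
    by (simp only: Suc_times_binomial of_nat_mult power_Suc mult_ac)
  also have "\<dots> = real (Suc M) * p"
    by (simp add: sum_distrib_left[symmetric] sum_binomial_weights)
  finally show ?thesis using Suc by simp
qed simp

lemma sum_Pow_card:
  assumes "finite A"
  shows "(\<Sum>z\<in>Pow A. f (card z)) =
    (\<Sum>k\<le>card A. of_nat (card A choose k) * (f k :: 'a::comm_semiring_1))"
proof -
  have "(\<Sum>z\<in>Pow A. f (card z)) = (\<Sum>k\<le>card A. \<Sum>z\<in>{z \<in> Pow A. card z = k}. f (card z))"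
    using assms by (intro sum.group[symmetric]) (auto intro: card_mono)
  also have "\<dots> = (\<Sum>k\<le>card A. \<Sum>z\<in>{z. z \<subseteq> A \<and> card z = k}. f k)"
    by (intro sum.cong) auto
  also have "\<dots> = (\<Sum>k\<le>card A. of_nat (card A choose k) * f k)"
    using n_subsets[OF assms] by simp
  finally show ?thesis .
qed

lemma card_points: "card (points m) = 2 ^ m"
  unfolding points_def by (simp add: card_Pow)

lemma finite_points [simp]: "finite (points m)"
  unfolding points_def by simp

lemma finite_sample_space [simp]: "finite (sample_space m)"
  unfolding sample_space_def by simp

lemma zprob_pos: "0 < d \<Longrightarrow> d < 1 \<Longrightarrow> 0 < zprob d m z"
  unfolding zprob_def by simp

lemma sum_zprob: "(\<Sum>z\<in>sample_space m. zprob d m z) = 1"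
  unfolding sample_space_def zprob_def
  by (subst sum_Pow_card)
    (simp_all add: card_points mult.assoc sum_binomial_weights[of "2 ^ m" d, simplified mult.assoc])

lemma entropy_zprob:
  assumes "0 < d" "d < 1"
  shows "- (\<Sum>z\<in>sample_space m. zprob d m z * log 2 (zprob d m z)) = 2 ^ m * bin_entropy d"
proof -
  let ?N = "2 ^ m :: nat"
  let ?w = "\<lambda>k. real (?N choose k) * d ^ k * (1 - d) ^ (?N - k)"
  have "(\<Sum>z\<in>sample_space m. zprob d m z * log 2 (zprob d m z)) =
      (\<Sum>z\<in>Pow (points m). (\<lambda>k. d ^ k * (1 - d) ^ (?N - k) *
         (real k * log 2 d + real (?N - k) * log 2 (1 - d))) (card z))"
    unfolding sample_space_def zprob_def using assms
    by (intro sum.cong refl) (simp add: log_mult log_nat_power)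
  also have "\<dots> = (\<Sum>k\<le>?N. real k * ?w k * (log 2 d - log 2 (1 - d)) + real ?N * log 2 (1 - d) * ?w k)"
    by (subst sum_Pow_card) (auto simp: card_points algebra_simps intro!: sum.cong)
  also have "\<dots> = (\<Sum>k\<le>?N. real k * ?w k) * (log 2 d - log 2 (1 - d))
      + real ?N * log 2 (1 - d) * (\<Sum>k\<le>?N. ?w k)"
    by (simp only: sum.distrib sum_distrib_left sum_distrib_right)
  also have "\<dots> = real ?N * d * (log 2 d - log 2 (1 - d)) + real ?N * log 2 (1 - d)"
    by (simp only: sum_binomial_weights sum_binomial_weights_mean mult_1_right)
  finally show ?thesis
    unfolding bin_entropy_def by (simp add: algebra_simps)
qed

lemma bin_entropy_pos:
  assumes "0 < d" "d < 1"
  shows "0 < bin_entropy d"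
proof -
  have "log 2 d < 0" "log 2 (1 - d) < 0"
    using assms by auto
  then have "0 < - d * log 2 d" "0 < - (1 - d) * log 2 (1 - d)"
    using assms by (simp_all add: mult_pos_neg mult_neg_neg)
  then show ?thesis
    unfolding bin_entropy_def by linarith
qed

section \<open>Entropy on a finite sample space\<close>

definition level_prob :: "('w \<Rightarrow> real) \<Rightarrow> 'w set \<Rightarrow> ('w \<Rightarrow> 'a) \<Rightarrow> 'w \<Rightarrow> real" where
  "level_prob P \<Omega> X w = (\<Sum>w'\<in>{w'\<in>\<Omega>. X w' = X w}. P w')"

definition discrete_entropy :: "('w \<Rightarrow> real) \<Rightarrow> 'w set \<Rightarrow> ('w \<Rightarrow> 'a) \<Rightarrow> real" where
  "discrete_entropy P \<Omega> X = - (\<Sum>w\<in>\<Omega>. P w * log 2 (level_prob P \<Omega> X w))"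

lemma level_prob_ge:
  assumes "finite \<Omega>" "\<And>w. w \<in> \<Omega> \<Longrightarrow> 0 \<le> P w" "w \<in> \<Omega>"
  shows "P w \<le> level_prob P \<Omega> X w"
  unfolding level_prob_def using assms by (intro member_le_sum) auto

lemma discrete_entropy_cong:
  assumes "\<And>w w'. w \<in> \<Omega> \<Longrightarrow> w' \<in> \<Omega> \<Longrightarrow> X w' = X w \<longleftrightarrow> Y w' = Y w"
  shows "discrete_entropy P \<Omega> X = discrete_entropy P \<Omega> Y"
proof -
  have "level_prob P \<Omega> X w = level_prob P \<Omega> Y w" if "w \<in> \<Omega>" for w
    unfolding level_prob_def using assms that by (intro sum.cong) auto
  then show ?thesis
    unfolding discrete_entropy_def by simp
qed

lemma discrete_entropy_const: "sum P \<Omega> = 1 \<Longrightarrow> discrete_entropy P \<Omega> (\<lambda>_. c) = 0"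
  unfolding discrete_entropy_def level_prob_def by simp

lemma level_prob_pos:
  assumes "finite \<Omega>" "\<And>w. w \<in> \<Omega> \<Longrightarrow> 0 < P w" "w \<in> \<Omega>"
  shows "0 < level_prob P \<Omega> X w"
  using assms level_prob_ge[of \<Omega> P w X] by (fastforce intro: less_le_trans less_imp_le)

lemma discrete_entropy_le:
  assumes "finite \<Omega>" "\<And>w. w \<in> \<Omega> \<Longrightarrow> 0 < P w"
  shows "discrete_entropy P \<Omega> X \<le> - (\<Sum>w\<in>\<Omega>. P w * log 2 (P w))"
proof -
  have "P w * log 2 (P w) \<le> P w * log 2 (level_prob P \<Omega> X w)" if "w \<in> \<Omega>" for w
    using assms that level_prob_ge[of \<Omega> P w X] level_prob_pos[of \<Omega> P w X]
    by (intro mult_left_mono) (auto simp: less_imp_le)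
  then show ?thesis
    unfolding discrete_entropy_def by (simp add: sum_mono)
qed

lemma cond_entropy_chain_rule:
  assumes fin: "finite \<Omega>" and pos: "\<And>w. w \<in> \<Omega> \<Longrightarrow> 0 < P w"
  shows "cond_entropy P \<Omega> X Y =
    discrete_entropy P \<Omega> (\<lambda>w. (X w, Y w)) - discrete_entropy P \<Omega> Y"
proof -
  define XY where "XY = (\<lambda>w. (X w, Y w))"
  define L where "L w = log 2 (level_prob P \<Omega> XY w / level_prob P \<Omega> Y w)" for w
  have "cond_entropy P \<Omega> X Y = - (\<Sum>ab\<in>XY ` \<Omega>. \<Sum>w\<in>{w\<in>\<Omega>. XY w = ab}. P w * L w)"
    unfolding cond_entropy_def Let_def XY_def L_def level_prob_def
    by (intro arg_cong[where f = uminus] sum.cong refl) (auto simp: sum_distrib_right intro!: sum.cong)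
  also have "\<dots> = - (\<Sum>w\<in>\<Omega>. P w * L w)"
    using fin by (subst sum.group) auto
  also have "\<dots> = - (\<Sum>w\<in>\<Omega>. P w * (log 2 (level_prob P \<Omega> XY w) - log 2 (level_prob P \<Omega> Y w)))"
  proof (intro arg_cong[where f = uminus] sum.cong refl)
    fix w assume "w \<in> \<Omega>"
    then have "0 < level_prob P \<Omega> XY w" "0 < level_prob P \<Omega> Y w"
      using fin pos by (simp_all add: level_prob_pos)
    then show "P w * L w = P w * (log 2 (level_prob P \<Omega> XY w) - log 2 (level_prob P \<Omega> Y w))"
      unfolding L_def by (simp add: log_divide)
  qed
  finally show ?thesis
    unfolding discrete_entropy_def XY_def by (simp add: right_diff_distrib sum_subtractf)
qed

section \<open>Telescoping the conditional entropies of the coefficients\<close>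

definition W_ge :: "nat \<Rightarrow> nat \<Rightarrow> nat set set \<Rightarrow> nat set set" where
  "W_ge m r z = {S \<in> coeffs m z. r \<le> card S}"

lemma W_gt_eq_W_ge_Suc: "W_gt m r = W_ge m (Suc r)"
  unfolding W_gt_def W_ge_def by (auto simp: Suc_le_eq)

lemma W_eq_W_gt_eq_iff:
  "(W_eq m r z', W_gt m r z') = (W_eq m r z, W_gt m r z) \<longleftrightarrow> W_ge m r z' = W_ge m r z"
proof -
  have "W_ge m r x = W_eq m r x \<union> W_gt m r x"
    and "W_eq m r x = {S \<in> W_ge m r x. card S = r}"
    and "W_gt m r x = {S \<in> W_ge m r x. r < card S}" for x
    unfolding W_eq_def W_gt_def W_ge_def by auto
  then show ?thesis
    by (metis prod.inject)
qed

lemma W_ge_Suc_self: "W_ge m (Suc m) = (\<lambda>_. {})"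
proof -
  have "card S \<le> m" if "S \<in> coeffs m z" for S z
    using that card_mono[of "{..<m}" S] unfolding coeffs_def points_def by auto
  then show ?thesis
    unfolding W_ge_def by (fastforce simp: fun_eq_iff)
qed

lemma cond_entropy_W_eq_W_gt:
  assumes "0 < d" "d < 1"
  shows "cond_entropy (zprob d m) (sample_space m) (W_eq m r) (W_gt m r) =
    discrete_entropy (zprob d m) (sample_space m) (W_ge m r)
    - discrete_entropy (zprob d m) (sample_space m) (W_ge m (Suc r))"
proof -
  have "discrete_entropy (zprob d m) (sample_space m) (\<lambda>z. (W_eq m r z, W_gt m r z)) =
      discrete_entropy (zprob d m) (sample_space m) (W_ge m r)"
    by (rule discrete_entropy_cong) (rule W_eq_W_gt_eq_iff)
  then show ?thesis
    using assms by (simp add: cond_entropy_chain_rule zprob_pos W_gt_eq_W_ge_Suc)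
qed

lemma sum_cond_entropy_W_le:
  assumes "0 < d" "d < 1" "r\<^sub>0 \<le> m"
  shows "(\<Sum>r=r\<^sub>0..m. cond_entropy (zprob d m) (sample_space m) (W_eq m r) (W_gt m r))
    \<le> 2 ^ m * bin_entropy d"
proof -
  let ?H = "\<lambda>r. discrete_entropy (zprob d m) (sample_space m) (W_ge m r)"
  have "(\<Sum>r=r\<^sub>0..m. cond_entropy (zprob d m) (sample_space m) (W_eq m r) (W_gt m r))
      = (\<Sum>r=r\<^sub>0..m. ?H r - ?H (Suc r))"
    using assms by (simp add: cond_entropy_W_eq_W_gt)
  also have "\<dots> = ?H r\<^sub>0 - ?H (Suc m)"
    using sum_Suc_diff[of r\<^sub>0 m "\<lambda>r. - ?H r"] assms by simp
  also have "?H (Suc m) = 0"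
    by (simp add: W_ge_Suc_self discrete_entropy_const sum_zprob)
  also have "?H r\<^sub>0 \<le> - (\<Sum>z\<in>sample_space m. zprob d m z * log 2 (zprob d m z))"
    using assms by (intro discrete_entropy_le) (simp_all add: zprob_pos)
  finally show ?thesis
    using entropy_zprob[OF assms(1,2)] by simp
qed

definition binom_quantile :: "nat \<Rightarrow> real \<Rightarrow> nat" where
  "binom_quantile m t = (LEAST r. t \<le> real (binom_le m r) / 2 ^ m)"

lemma r_star_eq_binom_quantile: "r_star d m eps = binom_quantile m (1 - bin_entropy d / (1 - eps))"
  unfolding r_star_def binom_quantile_def ..

lemma binom_le_self: "binom_le m m = 2 ^ m"
  unfolding binom_le_def by (rule choose_row_sum)

lemma binom_quantile_le: "t \<le> real (binom_le m r) / 2 ^ m \<Longrightarrow> binom_quantile m t \<le> r"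
  unfolding binom_quantile_def by (rule Least_le)

lemma binom_quantile_le_self: "t \<le> 1 \<Longrightarrow> binom_quantile m t \<le> m"
  by (rule binom_quantile_le) (simp add: binom_le_self)

lemma le_binom_le_binom_quantile: "t \<le> 1 \<Longrightarrow> t \<le> real (binom_le m (binom_quantile m t)) / 2 ^ m"
  unfolding binom_quantile_def by (rule LeastI[of _ m]) (simp add: binom_le_self)

lemma binom_le_less_binom_quantile: "j < binom_quantile m t \<Longrightarrow> real (binom_le m j) / 2 ^ m < t"
  unfolding binom_quantile_def using not_less_Least by fastforce

lemma binom_tail_from_quantile_gt:
  assumes "0 < t" "t \<le> 1"
  shows "(1 - t) * 2 ^ m < (\<Sum>r=binom_quantile m t..m. real (m choose r))"
proof -
  let ?q = "binom_quantile m t"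
  have head: "(\<Sum>r<?q. real (m choose r)) < t * 2 ^ m"
  proof (cases ?q)
    case (Suc j)
    have "(\<Sum>r<?q. real (m choose r)) = real (binom_le m j)"
      unfolding Suc binom_le_def lessThan_Suc_atMost by simp
    also have "\<dots> < t * 2 ^ m"
      using binom_le_less_binom_quantile[of j m t] Suc by (simp add: divide_less_eq)
    finally show ?thesis .
  qed (simp add: assms)
  have "{..m} = {..<?q} \<union> {?q..m}" "{..<?q} \<inter> {?q..m} = {}"
    using binom_quantile_le_self[OF assms(2), of m] by auto
  then have "(2 ^ m :: real) = (\<Sum>r<?q. real (m choose r)) + (\<Sum>r=?q..m. real (m choose r))"
    using choose_row_sum[of m] by (metis finite_atLeastAtMost finite_lessThan
        of_nat_numeral of_nat_power of_nat_sum sum.union_disjoint)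
  with head show ?thesis
    by (simp add: algebra_simps)
qed

lemma r_star_le_r_max:
  assumes "0 < d" "d < 1" "0 < eps" "eps < 1 - bin_entropy d"
  shows "r_star d m eps \<le> r_max d m eps"
proof -
  define t where "t = 1 - bin_entropy d / (1 - eps)"
  define q where "q = r_star d m eps"
  let ?H = "\<lambda>r. cond_entropy (zprob d m) (sample_space m) (W_eq m r) (W_gt m r)"
  have h: "0 < bin_entropy d" and eps1: "0 < 1 - eps"
    using assms bin_entropy_pos by force+
  then have t: "0 < t" "t \<le> 1" and ht: "bin_entropy d = (1 - eps) * (1 - t)"
    using assms by (simp_all add: t_def field_simps)
  have q: "q = binom_quantile m t" "q \<le> m"
    using binom_quantile_le_self[OF t(2)] by (simp_all add: q_def t_def r_star_eq_binom_quantile)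
  have "\<exists>r\<in>{q..m}. f_avg d m r < 1 - eps"
  proof (rule ccontr)
    assume "\<not> ?thesis"
    then have "(1 - eps) * real (m choose r) \<le> ?H r" if "r \<in> {q..m}" for r
      using that by (auto simp: f_avg_def not_less le_divide_eq)
    then have "(1 - eps) * (\<Sum>r=q..m. real (m choose r)) \<le> (\<Sum>r=q..m. ?H r)"
      by (simp add: sum_distrib_left) (rule sum_mono, simp)
    also have "\<dots> \<le> 2 ^ m * ((1 - eps) * (1 - t))"
      using sum_cond_entropy_W_le[OF assms(1,2) q(2)] by (simp add: ht)
    finally show False
      using binom_tail_from_quantile_gt[OF t, of m] eps1 q(1) by (simp add: mult_ac)
  qed
  then obtain r where "r \<in> {q..m}" "f_avg d m r < 1 - eps"
    by blast
  then show ?thesis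
    unfolding q_def[symmetric] r_max_def by (intro le_trans[OF _ Max_ge]) auto
qed

section \<open>The de Moivre--Laplace theorem\<close>

definition std_binomial :: "nat \<Rightarrow> real measure" where
  "std_binomial n = distr (measure_pmf (binomial_pmf n (1/2))) borel
     (\<lambda>k. (2 * real k - real n) / sqrt (real n))"

lemma real_distribution_std_binomial: "real_distribution (std_binomial n)"
  unfolding std_binomial_def
  by (intro prob_space.real_distribution_distr prob_space_measure_pmf) auto

lemma char_std_binomial: "char (std_binomial n) t = complex_of_real (cos (t / sqrt (real n)) ^ n)"
proof -
  define s where "s = t / sqrt (real n)"
  have "char (std_binomial n) t =
      (CLINT k|measure_pmf (binomial_pmf n (1/2)). iexp (t * ((2 * real k - real n) / sqrt (real n))))"
    unfolding char_def std_binomial_def by (subst integral_distr) auto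
  also have "\<dots> =
      (\<Sum>k\<le>n. pmf (binomial_pmf n (1/2)) k *\<^sub>R iexp (t * ((2 * real k - real n) / sqrt (real n))))"
    by (rule integral_measure_pmf) (auto simp: set_pmf_binomial_eq)
  also have "\<dots> = (\<Sum>k\<le>n. of_nat (n choose k) * iexp s ^ k * iexp (-s) ^ (n - k) / 2 ^ n)"
  proof (intro sum.cong refl)
    fix k assume "k \<in> {..n}"
    then have e: "t * ((2 * real k - real n) / sqrt (real n)) = real k * s + real (n - k) * (-s)"
      by (cases "n = 0") (simp_all add: s_def field_simps)
    have "iexp (real k * s + real (n - k) * (-s)) =
        exp (of_nat k * (\<i> * s)) * exp (of_nat (n - k) * (\<i> * (-s)))"
      by (simp add: exp_add[symmetric] algebra_simps)
    then have "iexp (t * ((2 * real k - real n) / sqrt (real n))) = iexp s ^ k * iexp (-s) ^ (n - k)"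
      unfolding e exp_of_nat_mult by simp
    moreover have "pmf (binomial_pmf n (1/2)) k = real (n choose k) / 2 ^ n"
      using \<open>k \<in> {..n}\<close> by (simp add: power_add[symmetric] field_simps)
    ultimately show "pmf (binomial_pmf n (1/2)) k *\<^sub>R iexp (t * ((2 * real k - real n) / sqrt (real n))) =
        of_nat (n choose k) * iexp s ^ k * iexp (-s) ^ (n - k) / 2 ^ n"
      by (simp add: scaleR_conv_of_real)
  qed
  also have "\<dots> = ((iexp s + iexp (-s)) / 2) ^ n"
    by (simp add: binomial_ring sum_divide_distrib power_divide)
  also have "iexp s + iexp (-s) = cis s + cis (-s)"
    by (simp add: cis_conv_exp)
  also have "(cis s + cis (-s)) / 2 = complex_of_real (cos s)"
    by (simp add: complex_eq_iff)
  finally show ?thesis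
    by (simp add: s_def)
qed

lemma weak_conv_std_binomial: "weak_conv_m std_binomial std_normal_distribution"
proof (rule levy_continuity)
  fix t
  have "(\<lambda>n. cos (t / sqrt (real n)) ^ n) \<longlonglongrightarrow> exp (- (t * t / 2))"
    by real_asymp
  then show "(\<lambda>n. char (std_binomial n) t) \<longlonglongrightarrow> char std_normal_distribution t"
    unfolding char_std_binomial char_std_normal_distribution
    by (intro tendsto_of_real) (simp add: power2_eq_square)
qed (simp_all add: real_distribution_std_binomial real_dist_normal_dist)

definition Phi :: "real \<Rightarrow> real" where
  "Phi = cdf std_normal_distribution"

lemma isCont_Phi: "isCont Phi x"
proof -
  interpret real_distribution std_normal_distribution
    by (rule real_dist_normal_dist)
  have "emeasure std_normal_distribution {x} = 0"
    by (subst emeasure_density) auto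
  then show ?thesis
    unfolding Phi_def isCont_cdf by (simp add: measure_def)
qed

lemma Phi_strict_mono:
  assumes "a < b"
  shows "Phi a < Phi b"
proof -
  interpret real_distribution std_normal_distribution
    by (rule real_dist_normal_dist)
  have "emeasure std_normal_distribution {a<..b} \<noteq> 0"
  proof
    assume "emeasure std_normal_distribution {a<..b} = 0"
    then have "AE x in lborel. ennreal (std_normal_density x) * indicator {a<..b} x = 0"
      by (subst (asm) emeasure_density, simp_all) (subst (asm) nn_integral_0_iff_AE, auto)
    then have "AE x in lborel. x \<notin> {a<..b}"
      by eventually_elim (auto simp: std_normal_density_def split: split_indicator)
    then have "emeasure lborel {x. a < x \<and> x \<le> b} = 0"
      by (subst (asm) AE_iff_measurable[OF _ refl]) auto
    moreover have "{x. a < x \<and> x \<le> b} = {a<..b}"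
      by auto
    ultimately show False
      using assms by simp
  qed
  then have "0 < measure std_normal_distribution {a<..b}"
    by (simp add: emeasure_eq_measure zero_less_measure_iff)
  then show ?thesis
    using cdf_diff_eq[OF assms] unfolding Phi_def by simp
qed

lemma Phi_surj:
  assumes "0 < t" "t < 1"
  obtains y where "Phi y = t"
proof -
  interpret real_distribution std_normal_distribution
    by (rule real_dist_normal_dist)
  have "eventually (\<lambda>x. Phi x < t) at_bot" "eventually (\<lambda>x. t < Phi x) at_top"
    using cdf_lim_at_bot cdf_lim_at_top_prob assms unfolding Phi_def by (auto intro: order_tendstoD)
  then obtain a b where "Phi a < t" "t < Phi b" "a \<le> b"
    by (metis eventually_at_bot_linorder eventually_at_top_linorder le_cases)
  then show ?thesis
    using IVT[of Phi a t b] isCont_Phi that by force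
qed

definition binom_le_real :: "nat \<Rightarrow> real \<Rightarrow> nat" where
  "binom_le_real n a = (\<Sum>k | k \<le> n \<and> real k \<le> a. n choose k)"

lemma cdf_std_binomial:
  assumes "1 \<le> n"
  shows "cdf (std_binomial n) x = real (binom_le_real n ((real n + x * sqrt (real n)) / 2)) / 2 ^ n"
proof -
  let ?B = "binomial_pmf n (1/2)"
  let ?K = "{k. k \<le> n \<and> real k \<le> (real n + x * sqrt (real n)) / 2}"
  have "cdf (std_binomial n) x = measure_pmf.prob ?B {k. (2 * real k - real n) / sqrt (real n) \<le> x}"
    unfolding cdf_def std_binomial_def by (subst measure_distr) (auto simp: vimage_def)
  also have "\<dots> = measure_pmf.prob ?B ?K"
    using assms by (intro measure_pmf.finite_measure_eq_AE AE_pmfI)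
      (auto simp: set_pmf_binomial_eq divide_le_eq field_simps)
  also have "\<dots> = (\<Sum>k\<in>?K. real (n choose k) / 2 ^ n)"
    by (subst measure_measure_pmf_finite) (auto simp: power_add[symmetric] field_simps intro!: sum.cong)
  finally show ?thesis
    by (simp add: binom_le_real_def sum_divide_distrib)
qed

theorem de_Moivre_Laplace:
  "(\<lambda>n. real (binom_le_real n ((real n + x * sqrt (real n)) / 2)) / 2 ^ n) \<longlonglongrightarrow> Phi x"
proof -
  have "(\<lambda>n. cdf (std_binomial n) x) \<longlonglongrightarrow> Phi x"
    using weak_conv_std_binomial isCont_Phi unfolding weak_conv_m_def weak_conv_def Phi_def by auto
  moreover have "eventually (\<lambda>n. cdf (std_binomial n) x =
      real (binom_le_real n ((real n + x * sqrt (real n)) / 2)) / 2 ^ n) sequentially"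
    using eventually_ge_at_top[of 1] by eventually_elim (rule cdf_std_binomial)
  ultimately show ?thesis
    by (rule Lim_transform_eventually)
qed

section \<open>Asymptotics of the binomial quantile\<close>

lemma binom_le_eq_sum: "binom_le n j = (\<Sum>k | k \<le> n \<and> k \<le> j. n choose k)"
  unfolding binom_le_def by (rule sum.mono_neutral_right) auto

lemma binom_le_real_eq_binom_le: "0 \<le> a \<Longrightarrow> binom_le_real n a = binom_le n (nat \<lfloor>a\<rfloor>)"
  unfolding binom_le_real_def binom_le_eq_sum
  by (intro sum.cong) (auto simp: le_nat_iff le_floor_iff)

lemma binom_le_le_binom_le_real: "real j \<le> a \<Longrightarrow> binom_le n j \<le> binom_le_real n a"
  unfolding binom_le_real_def binom_le_eq_sum
  by (rule sum_mono2) auto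

lemma binom_le_real_neg: "a < 0 \<Longrightarrow> binom_le_real n a = 0"
  unfolding binom_le_real_def by (auto intro!: sum.neutral)

lemma binom_quantile_le_iff:
  assumes "0 < t" "t \<le> 1"
  shows "real (binom_quantile m t) \<le> a \<longleftrightarrow> t \<le> real (binom_le_real m a) / 2 ^ m"
proof
  assume "real (binom_quantile m t) \<le> a"
  then have "binom_le m (binom_quantile m t) \<le> binom_le_real m a"
    by (rule binom_le_le_binom_le_real)
  then show "t \<le> real (binom_le_real m a) / 2 ^ m"
    using le_binom_le_binom_quantile[OF assms(2), of m] by (simp add: divide_right_mono order_trans)
next
  assume t: "t \<le> real (binom_le_real m a) / 2 ^ m"
  then have "0 \<le> a"
    using assms(1) binom_le_real_neg[of a m] by force
  then have "binom_quantile m t \<le> nat \<lfloor>a\<rfloor>"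
    using t by (intro binom_quantile_le) (simp add: binom_le_real_eq_binom_le)
  with \<open>0 \<le> a\<close> show "real (binom_quantile m t) \<le> a"
    by (simp add: le_nat_iff le_floor_iff)
qed

lemma binom_quantile_bounds:
  assumes "0 < t" "t \<le> 1" "Phi y = t" "y\<^sub>1 < y" "y < y\<^sub>2"
  shows "eventually (\<lambda>m. (real m + y\<^sub>1 * sqrt (real m)) / 2 < real (binom_quantile m t)
    \<and> real (binom_quantile m t) \<le> (real m + y\<^sub>2 * sqrt (real m)) / 2) sequentially"
proof -
  have "eventually (\<lambda>m.
      real (binom_le_real m ((real m + y\<^sub>1 * sqrt (real m)) / 2)) / 2 ^ m < t) sequentially"
    using Phi_strict_mono[OF assms(4)] assms(3) by (intro order_tendstoD(2)[OF de_Moivre_Laplace]) simp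
  moreover have "eventually (\<lambda>m.
      t < real (binom_le_real m ((real m + y\<^sub>2 * sqrt (real m)) / 2)) / 2 ^ m) sequentially"
    using Phi_strict_mono[OF assms(5)] assms(3) by (intro order_tendstoD(1)[OF de_Moivre_Laplace]) simp
  ultimately show ?thesis
  proof eventually_elim
    case (elim m)
    then show ?case
      using binom_quantile_le_iff[OF assms(1,2), of m "(real m + y\<^sub>1 * sqrt (real m)) / 2"]
        binom_quantile_le_iff[OF assms(1,2), of m "(real m + y\<^sub>2 * sqrt (real m)) / 2"]
      by linarith
  qed
qed

lemma binom_quantile_asymp:
  assumes "0 < t" "t \<le> 1" "Phi y = t"
  shows "(\<lambda>m. real (binom_quantile m t) - real m / 2 - y / 2 * sqrt (real m)) \<in> o(\<lambda>m. sqrt (real m))"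
proof (rule landau_o.smallI)
  fix c :: real
  assume "0 < c"
  then have "eventually (\<lambda>m. (real m + (y - c) * sqrt (real m)) / 2 < real (binom_quantile m t)
      \<and> real (binom_quantile m t) \<le> (real m + (y + c) * sqrt (real m)) / 2) sequentially"
    using assms by (intro binom_quantile_bounds) auto
  then show "eventually (\<lambda>m. norm (real (binom_quantile m t) - real m / 2 - y / 2 * sqrt (real m))
      \<le> c * norm (sqrt (real m))) sequentially"
    by eventually_elim (auto simp: abs_le_iff algebra_simps)
qed

lemma tendsto_binom_le_binom_quantile:
  assumes "0 < t" "t \<le> 1" "Phi y = t"
  shows "(\<lambda>m. real (binom_le m (binom_quantile m t)) / 2 ^ m) \<longlonglongrightarrow> t"
proof (rule order_tendstoI)
  fix l
  assume "l < t"
  then show "eventually (\<lambda>m. l < real (binom_le m (binom_quantile m t)) / 2 ^ m) sequentially"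
    using le_binom_le_binom_quantile[OF assms(2)] by (intro always_eventually allI) (auto intro: less_le_trans)
next
  fix u
  assume "t < u"
  moreover have "(Phi \<longlongrightarrow> t) (at_right y)"
    using isCont_Phi[of y] assms(3) unfolding isCont_def by (auto intro: tendsto_mono[OF at_le])
  ultimately have "eventually (\<lambda>x. Phi x < u) (at_right y)"
    by (simp add: order_tendstoD(2))
  then obtain y\<^sub>2 where "y < y\<^sub>2" "Phi y\<^sub>2 < u"
    by (auto simp: eventually_at_right_field dest: dense)
  have "eventually (\<lambda>m.
      real (binom_le_real m ((real m + y\<^sub>2 * sqrt (real m)) / 2)) / 2 ^ m < u) sequentially"
    using \<open>Phi y\<^sub>2 < u\<close> by (rule order_tendstoD(2)[OF de_Moivre_Laplace])
  moreover have "eventually (\<lambda>m.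
      real (binom_quantile m t) \<le> (real m + y\<^sub>2 * sqrt (real m)) / 2) sequentially"
    using binom_quantile_bounds[OF assms _ \<open>y < y\<^sub>2\<close>, of "y - 1"] by (auto elim: eventually_mono)
  ultimately show "eventually (\<lambda>m. real (binom_le m (binom_quantile m t)) / 2 ^ m < u) sequentially"
  proof eventually_elim
    case (elim m)
    then have "binom_le m (binom_quantile m t) \<le> binom_le_real m ((real m + y\<^sub>2 * sqrt (real m)) / 2)"
      by (intro binom_le_le_binom_le_real)
    then have "real (binom_le m (binom_quantile m t)) / 2 ^ m
        \<le> real (binom_le_real m ((real m + y\<^sub>2 * sqrt (real m)) / 2)) / 2 ^ m"
      by (simp add: divide_right_mono)
    with elim(1) show ?case
      by linarith
  qed
qed

theorem corollary7p2:
  fixes d eps :: real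
  assumes "0 < d" and "d < 1/2"
    and "0 < eps" and "eps < 1 - bin_entropy d"
  shows "(\<forall>m::nat. m \<ge> 1 \<longrightarrow> r_star d m eps \<le> r_max d m eps)
    \<and> (\<lambda>m. real (binom_le m (r_star d m eps)) / 2 ^ m)
        \<longlonglongrightarrow> 1 - bin_entropy d / (1 - eps)
    \<and> (\<exists>C::real. (\<lambda>m::nat. real (r_star d m eps) - real m / 2 - C * sqrt (real m))
                     \<in> o(\<lambda>m. sqrt (real m)))"
proof -
  define t where "t = 1 - bin_entropy d / (1 - eps)"
  have "0 < bin_entropy d"
    using assms by (simp add: bin_entropy_pos)
  then have t: "0 < t" "t < 1"
    using assms by (simp_all add: t_def field_simps)
  then obtain y where y: "Phi y = t"
    by (rule Phi_surj)
  have "r_star d m eps \<le> r_max d m eps" for m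
    using assms by (intro r_star_le_r_max) simp_all
  moreover have "(\<lambda>m. real (binom_le m (r_star d m eps)) / 2 ^ m) \<longlonglongrightarrow> t"
    unfolding r_star_eq_binom_quantile t_def[symmetric]
    using t y by (intro tendsto_binom_le_binom_quantile) simp_all
  moreover have "(\<lambda>m. real (r_star d m eps) - real m / 2 - y / 2 * sqrt (real m))
      \<in> o(\<lambda>m. sqrt (real m))"
    unfolding r_star_eq_binom_quantile t_def[symmetric]
    using t y by (intro binom_quantile_asymp) simp_all
  ultimately show ?thesis
    unfolding t_def by blast
qed

end
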